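(* Let $A\in\mathbb{R}^{n\times n}$ and $B\in\mathbb{R}^{n\times m}$ with $\rho(|A|)<1$, and let $T$ be a positive integer. Let $i,j\in\{1,\dots,n\}$, $i\neq j$, and $w\in\mathbb{R}$ be such that $\rho(|A|+|w|e_je_i^{\top})<1$. Then, whenever the respective Gramians are positive definite, $$\operatorname{tr}(\mathcal{W}_A^{-1})\ge\frac{n^2}{\operatorname{tr}(\mathcal{H}_{\mathcal{X}})},\qquad \operatorname{tr}(\mathcal{W}^{-1}_{A+we_je_i^{\top}})\ge\frac{n^2}{(1+\alpha\beta)\operatorname{tr}(\mathcal{H}_{\mathcal{X}})+\alpha^2\gamma\bar\gamma}.$$
   Context: $|\cdot|$ is taken entrywise; $\rho$ is the spectral radius; $e_k$ is the $k$-th canonical unit vector; $\|\cdot\|$ is the Euclidean norm. For $Z\in\mathbb{R}^{n\times n}$, $\mathcal{W}_Z=\sum_{t=0}^{T-1}Z^tBB^{\top}(Z^t)^{\top}$. Define $\mathcal{X}=(I-|A|)^{-1}$, $\mathcal{H}_{\mathcal{X}}=\mathcal{X}|B||B|^{\top}\mathcal{X}^{\top}$, $\alpha_{pq}=\frac{|w|}{1-|w|e_p^{\top}\mathcal{X}e_q}$, $\alpha=\max_{p\neq q}\alpha_{pq}$, $\beta=\max\{\max_{p\neq q}2e_p^{\top}\mathcal{X}e_q,\ \max_{p\neq q}e_p^{\top}\mathcal{X}e_q+\max_{q}\|\mathcal{X}e_q\|\}$, $\gamma=\max_k e_k^{\top}\mathcal{X}^{\top}\mathcal{X}e_k$, $\bar\gamma=\max_k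 e_k^{\top}\mathcal{X}|B||B|^{\top}\mathcal{X}^{\top}e_k$. *)

theory Defs
  imports "Jordan_Normal_Form.Spectral_Radius"
begin

definition abs_mat :: "real mat \<Rightarrow> real mat" where
  "abs_mat M = map_mat abs M"

definition rho :: "real mat \<Rightarrow> real" where
  "rho M = spectral_radius (map_mat complex_of_real M)"

definition trace_mat :: "real mat \<Rightarrow> real" where
  "trace_mat M = (\<Sum>k<dim_row M. M $$ (k, k))"

definition inv_mat :: "real mat \<Rightarrow> real mat" where
  "inv_mat M = (THE N. N \<in> carrier_mat (dim_row M) (dim_row M) \<and>
                       M * N = 1\<^sub>m (dim_row M) \<and> N * M = 1\<^sub>m (dim_row M))"

definition pos_def_mat :: "real mat \<Rightarrow> bool" where
  "pos_def_mat M \<longleftrightarrow> M \<in> carrier_mat (dim_row M) (dim_row M) \<and> M\<^sup>T = M \<and>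
     (\<forall>x \<in> carrier_vec (dim_row M). x \<noteq> 0\<^sub>v (dim_row M) \<longrightarrow> x \<bullet> (M *\<^sub>v x) > 0)"

definition unit_outer :: "nat \<Rightarrow> nat \<Rightarrow> nat \<Rightarrow> real mat" where
  "unit_outer n j i = mat_of_cols n [unit_vec n j] * mat_of_rows n [unit_vec n i]"

definition gramian :: "real mat \<Rightarrow> real mat \<Rightarrow> nat \<Rightarrow> real mat" where
  "gramian Z B T = fold (\<lambda>t W. W + (Z ^\<^sub>m t) * B * B\<^sup>T * (Z ^\<^sub>m t)\<^sup>T) [0..<T]
                      (0\<^sub>m (dim_row Z) (dim_row Z))"

definition Xmat :: "real mat \<Rightarrow> real mat" where
  "Xmat A = inv_mat (1\<^sub>m (dim_row A) - abs_mat A)"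

definition Hmat :: "real mat \<Rightarrow> real mat \<Rightarrow> real mat" where
  "Hmat A B = Xmat A * abs_mat B * (abs_mat B)\<^sup>T * (Xmat A)\<^sup>T"

(* e_p^T M e_q is the entry M $$ (p,q); ||v|| the Euclidean norm *)
definition vec_norm :: "real vec \<Rightarrow> real" where
  "vec_norm v = sqrt (v \<bullet> v)"

definition offdiag :: "nat \<Rightarrow> (nat \<times> nat) set" where
  "offdiag n = {(p, q). p < n \<and> q < n \<and> p \<noteq> q}"

definition alpha_pq :: "real mat \<Rightarrow> real \<Rightarrow> nat \<Rightarrow> nat \<Rightarrow> real" where
  "alpha_pq A w p q = \<bar>w\<bar> / (1 - \<bar>w\<bar> * (Xmat A $$ (p, q)))"

definition alpha_c :: "real mat \<Rightarrow> real \<Rightarrow> real" where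
  "alpha_c A w = Max ((\<lambda>(p, q). alpha_pq A w p q) ` offdiag (dim_row A))"

definition beta_c :: "real mat \<Rightarrow> real" where
  "beta_c A = max (Max ((\<lambda>(p, q). 2 * (Xmat A $$ (p, q))) ` offdiag (dim_row A)))
                  (Max ((\<lambda>(p, q). Xmat A $$ (p, q)) ` offdiag (dim_row A))
                   + Max ((\<lambda>q. vec_norm (col (Xmat A) q)) ` {..<dim_row A}))"

definition gamma_c :: "real mat \<Rightarrow> real" where
  "gamma_c A = Max ((\<lambda>k. ((Xmat A)\<^sup>T * Xmat A) $$ (k, k)) ` {..<dim_row A})"

definition gamma_bar_c :: "real mat \<Rightarrow> real mat \<Rightarrow> real" where
  "gamma_bar_c A B = Max ((\<lambda>k. Hmat A B $$ (k, k)) ` {..<dim_row A})"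

end

(*
  For a positive definite n x n matrix W, the quadratic form of W at tr(W) W^-1 e_k - n e_k is
  nonnegative; summing over k gives tr(W^-1) tr(W) >= n^2. So both bounds follow from upper
  bounds on the trace of the Gramian.

  If |Z| <= M entrywise, where M >= 0 and rho(M) < 1, then |Z^t| <= M^t, hence
  tr W_Z = sum_t ||Z^t B||_F^2 <= ||(sum_t M^t) |B| ||_F^2 <= ||(I - M)^-1 |B| ||_F^2, because the
  Neumann series of M converges (its powers decay geometrically) to the nonnegative matrix
  (I - M)^-1. For M = |A| this bound is tr H_X. For M = |A| + |w| e_j e_i^T the Sherman-Morrison
  formula gives (I - M)^-1 = X + alpha_ij X e_j e_i^T X, a rank-one perturbation of X. Expanding
  the Frobenius norm of (X + alpha_ij X e_j e_i^T X)|B|, the cross term is controlled by the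
  largest eigenvalue of a 2 x 2 quadratic form, which is where beta comes from.
*)

theory Submission
  imports Defs "HOL-Analysis.Convex"
begin

lemma index_mult_mat_sum:
  assumes "A \<in> carrier_mat a n" "B \<in> carrier_mat n b" "p < a" "q < b"
  shows "(A * B) $$ (p, q) = (\<Sum>l<n. A $$ (p, l) * B $$ (l, q))"
  using assms by (simp add: scalar_prod_def lessThan_atLeast0)

lemma index_one_minus_mult_mat:
  fixes M Y :: "'a :: comm_ring_1 mat"
  assumes "M \<in> carrier_mat n n" "Y \<in> carrier_mat n k" "p < n" "q < k"
  shows "((1\<^sub>m n - M) * Y) $$ (p, q) = Y $$ (p, q) - (\<Sum>l<n. M $$ (p, l) * Y $$ (l, q))"
proof -
  have "((1\<^sub>m n - M) * Y) $$ (p, q) = (\<Sum>l<n. (1\<^sub>m n - M) $$ (p, l) * Y $$ (l, q))"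
    using assms by (intro index_mult_mat_sum) auto
  also have "\<dots> = (\<Sum>l<n. (if p = l then Y $$ (l, q) else 0) - M $$ (p, l) * Y $$ (l, q))"
    using assms by (intro sum.cong) (auto simp: left_diff_distrib)
  finally show ?thesis
    using assms by (simp add: sum_subtractf)
qed

lemma abs_mat_carrier: "M \<in> carrier_mat n m \<Longrightarrow> abs_mat M \<in> carrier_mat n m"
  unfolding abs_mat_def by simp

lemma index_abs_mat: "p < dim_row M \<Longrightarrow> q < dim_col M \<Longrightarrow> abs_mat M $$ (p, q) = \<bar>M $$ (p, q)\<bar>"
  unfolding abs_mat_def by simp

lemma inv_mat_eqI:
  fixes A N :: "real mat"
  assumes A: "A \<in> carrier_mat n n" and N: "N \<in> carrier_mat n n" and AN: "A * N = 1\<^sub>m n"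
  shows "inv_mat A = N"
proof -
  have dim: "dim_row A = n" using A by auto
  have NA: "N * A = 1\<^sub>m n" by (rule mat_mult_left_right_inverse[OF A N AN])
  show ?thesis
    unfolding inv_mat_def dim
  proof (rule the_equality)
    fix N' assume N': "N' \<in> carrier_mat n n \<and> A * N' = 1\<^sub>m n \<and> N' * A = 1\<^sub>m n"
    then have "N' = N' * (A * N)" using AN by (metis right_mult_one_mat)
    also have "\<dots> = (N' * A) * N" using A N N' by (metis assoc_mult_mat)
    also have "\<dots> = N" using N N' by simp
    finally show "N' = N" .
  qed (use N AN NA in auto)
qed

lemma inv_mat_if_trivial_kernel:
  fixes A :: "real mat"
  assumes A: "A \<in> carrier_mat n n"
    and ker: "\<And>v. v \<in> carrier_vec n \<Longrightarrow> A *\<^sub>v v = 0\<^sub>v n \<Longrightarrow> v = 0\<^sub>v n"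
  shows "inv_mat A \<in> carrier_mat n n" and "A * inv_mat A = 1\<^sub>m n"
proof -
  have "det A \<noteq> 0" using det_0_iff_vec_prod_zero[OF A] ker by auto
  from det_non_zero_imp_unit[OF A this, of undefined]
  obtain N where N: "N \<in> carrier_mat n n" "A * N = 1\<^sub>m n"
    unfolding Units_def ring_mat_def by auto
  with inv_mat_eqI[OF A N] show "inv_mat A \<in> carrier_mat n n" "A * inv_mat A = 1\<^sub>m n" by auto
qed

section \<open>Spectral radius and the Neumann series\<close>

lemma rho_nonneg:
  assumes "M \<in> carrier_mat n n" "0 < n"
  shows "0 \<le> rho M"
  using spectral_radius_mem_max(1)[of "map_mat complex_of_real M" n] assms
  unfolding rho_def by auto

lemma abs_eigenvalue_le_rho:
  fixes M :: "real mat"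
  assumes M: "M \<in> carrier_mat n n" and ev: "eigenvalue M k"
  shows "\<bar>k\<bar> \<le> rho M"
proof -
  let ?C = "map_mat complex_of_real M"
  have C: "?C \<in> carrier_mat n n" using M by auto
  have "eigenvalue ?C (complex_of_real k)" by (rule of_real_hom.eigenvalue_hom[OF M ev])
  then have "\<bar>k\<bar> \<in> norm ` spectrum ?C"
    unfolding spectrum_def by (metis image_eqI mem_Collect_eq norm_of_real)
  moreover have "0 < n" using eigenvalue_imp_nonzero_dim[OF M ev] .
  ultimately show ?thesis using spectral_radius_mem_max(2)[OF C] unfolding rho_def by auto
qed

lemma rho_lt_1_kernel_one_minus:
  fixes M :: "real mat"
  assumes M: "M \<in> carrier_mat n n" and rho: "rho M < 1"
    and v: "v \<in> carrier_vec n" and ker: "(1\<^sub>m n - M) *\<^sub>v v = 0\<^sub>v n"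
  shows "v = 0\<^sub>v n"
proof (rule ccontr)
  assume "v \<noteq> 0\<^sub>v n"
  moreover have "M *\<^sub>v v = v"
  proof (rule eq_vecI)
    have "v - M *\<^sub>v v = 0\<^sub>v n"
      using ker minus_mult_distrib_mat_vec[OF one_carrier_mat M v] v by simp
    then show "(M *\<^sub>v v) $ p = v $ p" if "p < dim_vec v" for p
      using that M v by (metis carrier_vecD index_minus_vec(1) index_zero_vec(1) mult_mat_vec_carrier right_minus_eq)
  qed (use M v in auto)
  ultimately have "eigenvalue M 1" using M v unfolding eigenvalue_def eigenvector_def by auto
  with abs_eigenvalue_le_rho[OF M] rho show False by fastforce
qed

lemma eigenvalue_smult_mat:
  fixes A :: "'a :: comm_ring_1 mat"
  assumes A: "A \<in> carrier_mat n n" and ev: "eigenvalue A k"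
  shows "eigenvalue (c \<cdot>\<^sub>m A) (c * k)"
proof -
  obtain v where v: "v \<in> carrier_vec n" "v \<noteq> 0\<^sub>v n" "A *\<^sub>v v = k \<cdot>\<^sub>v v"
    using ev A unfolding eigenvalue_def eigenvector_def by auto
  have "(c \<cdot>\<^sub>m A) *\<^sub>v v = c \<cdot>\<^sub>v (A *\<^sub>v v)"
    using A v(1) by (intro eq_vecI) (auto simp: mult_mat_vec_def scalar_prod_def sum_distrib_left ac_simps)
  also have "\<dots> = (c * k) \<cdot>\<^sub>v v" using v(3) by (simp add: smult_smult_assoc)
  finally have "(c \<cdot>\<^sub>m A) *\<^sub>v v = (c * k) \<cdot>\<^sub>v v" .
  with v A show ?thesis unfolding eigenvalue_def eigenvector_def by auto
qed

lemma pow_smult_mat: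
  fixes A :: "'a :: comm_ring_1 mat"
  assumes A: "A \<in> carrier_mat n n"
  shows "(c \<cdot>\<^sub>m A) ^\<^sub>m k = c ^ k \<cdot>\<^sub>m (A ^\<^sub>m k)"
proof (induction k)
  case 0
  show ?case by (rule eq_matI) (use A in auto)
next
  case (Suc k)
  have "(c \<cdot>\<^sub>m A) ^\<^sub>m Suc k = (c ^ k \<cdot>\<^sub>m (A ^\<^sub>m k)) * (c \<cdot>\<^sub>m A)" using Suc by simp
  also have "\<dots> = c ^ Suc k \<cdot>\<^sub>m (A ^\<^sub>m Suc k)"
    using A by (intro eq_matI) (auto simp: scalar_prod_def sum_distrib_left ac_simps)
  finally show ?case .
qed

lemma spectral_radius_scaled_lt_1:
  fixes M :: "real mat"
  assumes M: "M \<in> carrier_mat n n" and n: "0 < n" and r: "0 < r" "rho M < r"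
  shows "spectral_radius (complex_of_real (1 / r) \<cdot>\<^sub>m map_mat complex_of_real M) < 1"
proof -
  let ?C = "map_mat complex_of_real M" and ?N = "complex_of_real (1 / r) \<cdot>\<^sub>m map_mat complex_of_real M"
  have C: "?C \<in> carrier_mat n n" and N: "?N \<in> carrier_mat n n" using M by auto
  have CN: "complex_of_real r \<cdot>\<^sub>m ?N = ?C" using r by (intro eq_matI) auto
  have "norm z < 1" if "z \<in> spectrum ?N" for z
  proof -
    have "eigenvalue ?C (complex_of_real r * z)"
      using eigenvalue_smult_mat[OF N, of z "complex_of_real r"] that unfolding CN spectrum_def by auto
    then have "r * norm z \<le> rho M"
      using spectral_radius_mem_max(2)[OF C n] r unfolding rho_def spectrum_def by (force simp: norm_mult)
    then have "r * norm z < r * 1" using r by linarith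
    then show ?thesis using r by simp
  qed
  moreover have "spectral_radius ?N \<in> norm ` spectrum ?N"
    using spectral_radius_mem_max(1)[OF N n] .
  ultimately show ?thesis by auto
qed

lemma rho_lt_1_pow_entries_decay:
  fixes M :: "real mat"
  assumes M: "M \<in> carrier_mat n n" and rho: "rho M < 1"
  obtains r c where "0 \<le> r" "r < 1"
    and "\<And>k p q. p < n \<Longrightarrow> q < n \<Longrightarrow> \<bar>(M ^\<^sub>m k) $$ (p, q)\<bar> \<le> c * r ^ k"
proof (cases "n = 0")
  case True
  then show ?thesis using that[where r = 0 and c = 0] by simp
next
  case False
  define r where "r = (1 + rho M) / 2"
  have r: "0 < r" "r < 1" "rho M < r" using rho rho_nonneg[OF M] False unfolding r_def by auto
  define N where "N = complex_of_real (1 / r) \<cdot>\<^sub>m map_mat complex_of_real M"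
  have N: "N \<in> carrier_mat n n" unfolding N_def using M by auto
  \<comment> \<open>the powers of \<open>N = M / r\<close> stay bounded, so those of \<open>M\<close> decay like \<open>r\<^sup>k\<close>\<close>
  from spectral_radius_jnf_norm_bound_less_1_upper_triangular[OF N]
    spectral_radius_scaled_lt_1[OF M _ r(1,3)] False
  obtain c where c: "\<And>k. norm_bound (N ^\<^sub>m k) c" unfolding N_def by auto
  have "\<bar>(M ^\<^sub>m k) $$ (p, q)\<bar> \<le> c * r ^ k" if pq: "p < n" "q < n" for k p q
  proof -
    have C: "map_mat complex_of_real M \<in> carrier_mat n n" using M by simp
    have "N ^\<^sub>m k = complex_of_real (1 / r) ^ k \<cdot>\<^sub>m map_mat complex_of_real (M ^\<^sub>m k)"
      unfolding N_def pow_smult_mat[OF C] of_real_hom.mat_hom_pow[OF M] ..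
    then have "(N ^\<^sub>m k) $$ (p, q) = complex_of_real (1 / r) ^ k * complex_of_real ((M ^\<^sub>m k) $$ (p, q))"
      using pq M by simp
    moreover have "norm ((N ^\<^sub>m k) $$ (p, q)) \<le> c"
      using c[of k] pq N unfolding norm_bound_def by simp
    ultimately have "(1 / r) ^ k * \<bar>(M ^\<^sub>m k) $$ (p, q)\<bar> \<le> c"
      using r by (simp add: norm_mult norm_power norm_divide)
    then show ?thesis using r by (simp add: field_simps)
  qed
  with r show ?thesis by (intro that[where r = r and c = c]) auto
qed

lemma le_zero_if_le_geometric:
  fixes y K r :: real
  assumes r: "0 \<le> r" "r < 1" and le: "\<And>k. y \<le> K * r ^ k"
  shows "y \<le> 0"
proof (rule ccontr)
  assume "\<not> y \<le> 0"
  then have y: "0 < y" by simp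
  then have K: "0 < K" using le[of 0] by simp
  obtain k where "r ^ k < y / K" using real_arch_pow_inv[of "y / K" r] y K r by auto
  with le[of k] K show False by (simp add: field_simps)
qed

lemma index_pow_mat_Suc:
  assumes M: "M \<in> carrier_mat n n" and "p < n" "q < n"
  shows "(M ^\<^sub>m Suc k) $$ (p, q) = (\<Sum>l<n. (M ^\<^sub>m k) $$ (p, l) * M $$ (l, q))"
  using index_mult_mat_sum[OF pow_carrier_mat[OF M] M assms(2,3)] by simp

lemma pow_mat_nonneg:
  fixes M :: "real mat"
  assumes M: "M \<in> carrier_mat n n" and nonneg: "\<And>p q. p < n \<Longrightarrow> q < n \<Longrightarrow> 0 \<le> M $$ (p, q)"
  shows "p < n \<Longrightarrow> q < n \<Longrightarrow> 0 \<le> (M ^\<^sub>m k) $$ (p, q)"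
proof (induction k arbitrary: q)
  case (Suc k)
  then show ?case
    unfolding index_pow_mat_Suc[OF M Suc.prems] using nonneg by (intro sum_nonneg mult_nonneg_nonneg) auto
qed (use M in auto)

lemma abs_pow_mat_le:
  fixes M Z :: "real mat"
  assumes M: "M \<in> carrier_mat n n" and Z: "Z \<in> carrier_mat n n"
    and dom: "\<And>p q. p < n \<Longrightarrow> q < n \<Longrightarrow> \<bar>Z $$ (p, q)\<bar> \<le> M $$ (p, q)"
  shows "p < n \<Longrightarrow> q < n \<Longrightarrow> \<bar>(Z ^\<^sub>m k) $$ (p, q)\<bar> \<le> (M ^\<^sub>m k) $$ (p, q)"
proof (induction k arbitrary: q)
  case (Suc k)
  have "\<bar>(Z ^\<^sub>m Suc k) $$ (p, q)\<bar> \<le> (\<Sum>l<n. \<bar>(Z ^\<^sub>m k) $$ (p, l)\<bar> * \<bar>Z $$ (l, q)\<bar>)"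
    unfolding index_pow_mat_Suc[OF Z Suc.prems] abs_mult[symmetric] by (rule sum_abs)
  also have "\<dots> \<le> (\<Sum>l<n. (M ^\<^sub>m k) $$ (p, l) * M $$ (l, q))"
    using Suc dom by (intro sum_mono mult_mono) (auto intro: order_trans[OF abs_ge_zero])
  also have "\<dots> = (M ^\<^sub>m Suc k) $$ (p, q)"
    using index_pow_mat_Suc[OF M Suc.prems] by simp
  finally show ?case .
qed (use M Z in auto)

lemma one_minus_inverse_fixpoint:
  fixes M Y :: "'a :: comm_ring_1 mat"
  assumes M: "M \<in> carrier_mat n n" and Y: "Y \<in> carrier_mat n n" and inv: "(1\<^sub>m n - M) * Y = 1\<^sub>m n"
  shows "Y = 1\<^sub>m n + M * Y"
proof (rule eq_matI)
  fix i j assume "i < dim_row (1\<^sub>m n + M * Y)" "j < dim_col (1\<^sub>m n + M * Y)"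
  then have ij: "i < n" "j < n" using M Y by auto
  have "Y $$ (i, j) = ((1\<^sub>m n - M) * Y) $$ (i, j) + (M * Y) $$ (i, j)"
    using index_one_minus_mult_mat[OF M Y ij] index_mult_mat_sum[OF M Y ij] by simp
  also have "\<dots> = (1\<^sub>m n + M * Y) $$ (i, j)" using inv M Y ij by simp
  finally show "Y $$ (i, j) = (1\<^sub>m n + M * Y) $$ (i, j)" .
qed (use M Y in auto)

lemma one_minus_inverse_expansion:
  fixes M Y :: "'a :: comm_ring_1 mat"
  assumes M: "M \<in> carrier_mat n n" and Y: "Y \<in> carrier_mat n n"
    and inv: "(1\<^sub>m n - M) * Y = 1\<^sub>m n" and p: "p < n" and q: "q < n"
  shows "Y $$ (p, q) = (\<Sum>t<k. (M ^\<^sub>m t) $$ (p, q)) + (M ^\<^sub>m k * Y) $$ (p, q)"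
proof (induction k)
  case (Suc k)
  have Mk: "M ^\<^sub>m k \<in> carrier_mat n n" using M by simp
  have "M ^\<^sub>m k * Y = M ^\<^sub>m k * (1\<^sub>m n + M * Y)"
    using one_minus_inverse_fixpoint[OF M Y inv] by simp
  also have "\<dots> = M ^\<^sub>m k + M ^\<^sub>m Suc k * Y"
    using mult_add_distrib_mat[OF Mk one_carrier_mat mult_carrier_mat[OF M Y]] Mk M Y
    by (simp add: assoc_mult_mat[of _ n n M n Y])
  finally have "(M ^\<^sub>m k * Y) $$ (p, q) = (M ^\<^sub>m k) $$ (p, q) + (M ^\<^sub>m Suc k * Y) $$ (p, q)"
    using M Y p q by simp
  then show ?case
    unfolding sum.lessThan_Suc add.assoc by (simp only: Suc.IH)
qed (use M Y p q in simp)

lemma one_minus_inverse_nonneg: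
  fixes M Y :: "real mat"
  assumes M: "M \<in> carrier_mat n n" and nonneg: "\<And>p q. p < n \<Longrightarrow> q < n \<Longrightarrow> 0 \<le> M $$ (p, q)"
    and rho: "rho M < 1" and Y: "Y \<in> carrier_mat n n" and YM: "(1\<^sub>m n - M) * Y = 1\<^sub>m n"
    and pq: "p < n" "q < n"
  shows "0 \<le> Y $$ (p, q)"
proof -
  obtain r c where r: "0 \<le> r" "r < 1"
    and decay: "\<And>k p q. p < n \<Longrightarrow> q < n \<Longrightarrow> \<bar>(M ^\<^sub>m k) $$ (p, q)\<bar> \<le> c * r ^ k"
    using rho_lt_1_pow_entries_decay[OF M rho] by blast
  \<comment> \<open>\<open>Y\<close> differs from a nonnegative partial sum by \<open>M\<^sup>k Y\<close>, which decays geometrically\<close>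
  have "- Y $$ (p, q) \<le> (c * (\<Sum>l<n. \<bar>Y $$ (l, q)\<bar>)) * r ^ k" for k
  proof -
    have "0 \<le> (\<Sum>t<k. (M ^\<^sub>m t) $$ (p, q))"
      using pow_mat_nonneg[OF M nonneg pq] by (simp add: sum_nonneg)
    then have "- Y $$ (p, q) \<le> \<bar>(M ^\<^sub>m k * Y) $$ (p, q)\<bar>"
      using one_minus_inverse_expansion[OF M Y YM pq, of k] by linarith
    also have "\<dots> \<le> (\<Sum>l<n. \<bar>(M ^\<^sub>m k) $$ (p, l)\<bar> * \<bar>Y $$ (l, q)\<bar>)"
      unfolding index_mult_mat_sum[OF pow_carrier_mat[OF M] Y pq] abs_mult[symmetric] by (rule sum_abs)
    also have "\<dots> \<le> (\<Sum>l<n. c * r ^ k * \<bar>Y $$ (l, q)\<bar>)"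
      using decay pq by (intro sum_mono mult_right_mono) auto
    also have "\<dots> = (c * r ^ k) * (\<Sum>l<n. \<bar>Y $$ (l, q)\<bar>)"
      by (rule sum_distrib_left[symmetric])
    finally show ?thesis by (simp only: ac_simps)
  qed
  then have "- Y $$ (p, q) \<le> 0" by (rule le_zero_if_le_geometric[OF r])
  then show ?thesis by simp
qed

lemma neumann_inverse:
  fixes M :: "real mat"
  assumes M: "M \<in> carrier_mat n n" and nonneg: "\<And>p q. p < n \<Longrightarrow> q < n \<Longrightarrow> 0 \<le> M $$ (p, q)"
    and rho: "rho M < 1"
  shows "inv_mat (1\<^sub>m n - M) \<in> carrier_mat n n" and "(1\<^sub>m n - M) * inv_mat (1\<^sub>m n - M) = 1\<^sub>m n"
    and "\<And>p q. p < n \<Longrightarrow> q < n \<Longrightarrow> (\<Sum>t<T. (M ^\<^sub>m t) $$ (p, q)) \<le> inv_mat (1\<^sub>m n - M) $$ (p, q)"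
proof -
  define Y where "Y = inv_mat (1\<^sub>m n - M)"
  have "1\<^sub>m n - M \<in> carrier_mat n n" using M by (rule minus_carrier_mat)
  from inv_mat_if_trivial_kernel[OF this rho_lt_1_kernel_one_minus[OF M rho]]
  have Y: "Y \<in> carrier_mat n n" and YM: "(1\<^sub>m n - M) * Y = 1\<^sub>m n"
    unfolding Y_def by auto
  then show "inv_mat (1\<^sub>m n - M) \<in> carrier_mat n n" "(1\<^sub>m n - M) * inv_mat (1\<^sub>m n - M) = 1\<^sub>m n"
    unfolding Y_def by auto
  fix p q assume pq: "p < n" "q < n"
  have "0 \<le> (M ^\<^sub>m T * Y) $$ (p, q)"
    unfolding index_mult_mat_sum[OF pow_carrier_mat[OF M] Y pq]
    using pow_mat_nonneg[OF M nonneg pq(1)] one_minus_inverse_nonneg[OF M nonneg rho Y YM _ pq(2)]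
    by (intro sum_nonneg mult_nonneg_nonneg) auto
  then show "(\<Sum>t<T. (M ^\<^sub>m t) $$ (p, q)) \<le> inv_mat (1\<^sub>m n - M) $$ (p, q)"
    using one_minus_inverse_expansion[OF M Y YM pq, of T] unfolding Y_def by linarith
qed

section \<open>Gramians and Frobenius norms\<close>

definition frobenius_sq :: "real mat \<Rightarrow> real" where
  "frobenius_sq M = (\<Sum>k<dim_row M. \<Sum>l<dim_col M. (M $$ (k, l))\<^sup>2)"

lemma trace_mult_transpose_self: "trace_mat (G * G\<^sup>T) = frobenius_sq G"
  unfolding trace_mat_def frobenius_sq_def
  by (intro sum.cong refl) (auto simp: scalar_prod_def lessThan_atLeast0 power2_eq_square)

lemma trace_mat_add:
  assumes "A \<in> carrier_mat n n" "B \<in> carrier_mat n n"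
  shows "trace_mat (A + B) = trace_mat A + trace_mat B"
  using assms unfolding trace_mat_def by (simp add: sum.distrib)

lemma mult_transpose_assoc:
  fixes P Q :: "'a :: comm_semiring_1 mat"
  assumes "P \<in> carrier_mat a b" "Q \<in> carrier_mat b c"
  shows "P * Q * Q\<^sup>T * P\<^sup>T = (P * Q) * (P * Q)\<^sup>T"
proof -
  have "P * Q * Q\<^sup>T * P\<^sup>T = (P * Q) * (Q\<^sup>T * P\<^sup>T)"
    using assms by (intro assoc_mult_mat) auto
  then show ?thesis using transpose_mult[OF assms] by simp
qed

lemma gramian_Suc: "gramian Z B (Suc T) = gramian Z B T + Z ^\<^sub>m T * B * B\<^sup>T * (Z ^\<^sub>m T)\<^sup>T"
  unfolding gramian_def by simp

lemma gramian_carrier: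
  assumes "Z \<in> carrier_mat n n" "B \<in> carrier_mat n m"
  shows "gramian Z B T \<in> carrier_mat n n"
  using assms by (induction T) (auto simp: gramian_Suc, simp add: gramian_def)

lemma trace_gramian:
  assumes Z: "Z \<in> carrier_mat n n" and B: "B \<in> carrier_mat n m"
  shows "trace_mat (gramian Z B T) = (\<Sum>t<T. frobenius_sq (Z ^\<^sub>m t * B))"
proof (induction T)
  case 0
  then show ?case using Z by (simp add: gramian_def trace_mat_def)
next
  case (Suc T)
  have "Z ^\<^sub>m T * B * B\<^sup>T * (Z ^\<^sub>m T)\<^sup>T = (Z ^\<^sub>m T * B) * (Z ^\<^sub>m T * B)\<^sup>T"
    using Z B by (intro mult_transpose_assoc) auto
  moreover have "(Z ^\<^sub>m T * B) * (Z ^\<^sub>m T * B)\<^sup>T \<in> carrier_mat n n"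
    using Z B by (metis mult_carrier_mat pow_carrier_mat transpose_carrier_mat)
  ultimately show ?case
    using Suc by (simp add: gramian_Suc trace_mat_add[OF gramian_carrier[OF Z B]] trace_mult_transpose_self)
qed

lemma sum_squares_le_square_sum:
  fixes a :: "nat \<Rightarrow> real"
  assumes "\<And>t. 0 \<le> a t"
  shows "(\<Sum>t<T. (a t)\<^sup>2) \<le> (\<Sum>t<T. a t)\<^sup>2"
proof (induction T)
  case (Suc T)
  have "0 \<le> 2 * (\<Sum>t<T. a t) * a T" using assms by (simp add: sum_nonneg)
  moreover have "(\<Sum>t<Suc T. a t)\<^sup>2 = (\<Sum>t<T. a t)\<^sup>2 + 2 * (\<Sum>t<T. a t) * a T + (a T)\<^sup>2"
    by (simp add: power2_sum)
  moreover have "(\<Sum>t<Suc T. (a t)\<^sup>2) = (\<Sum>t<T. (a t)\<^sup>2) + (a T)\<^sup>2" by simp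
  ultimately show ?case using Suc.IH by linarith
qed simp

lemma sum_squares_pow_mult_entry_le:
  fixes Z M B Y :: "real mat"
  assumes Z: "Z \<in> carrier_mat n n" and M: "M \<in> carrier_mat n n" and B: "B \<in> carrier_mat n m"
    and Y: "Y \<in> carrier_mat n n"
    and dom: "\<And>p q. p < n \<Longrightarrow> q < n \<Longrightarrow> \<bar>Z $$ (p, q)\<bar> \<le> M $$ (p, q)"
    and partial: "\<And>p q. p < n \<Longrightarrow> q < n \<Longrightarrow> (\<Sum>t<T. (M ^\<^sub>m t) $$ (p, q)) \<le> Y $$ (p, q)"
    and kl: "k < n" "l < m"
  shows "(\<Sum>t<T. ((Z ^\<^sub>m t * B) $$ (k, l))\<^sup>2) \<le> ((Y * abs_mat B) $$ (k, l))\<^sup>2"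
proof -
  define a where "a t = (\<Sum>q<n. (M ^\<^sub>m t) $$ (k, q) * \<bar>B $$ (q, l)\<bar>)" for t
  have abs_le: "\<bar>(Z ^\<^sub>m t * B) $$ (k, l)\<bar> \<le> a t" for t
  proof -
    have "\<bar>(Z ^\<^sub>m t * B) $$ (k, l)\<bar> \<le> (\<Sum>q<n. \<bar>(Z ^\<^sub>m t) $$ (k, q)\<bar> * \<bar>B $$ (q, l)\<bar>)"
      unfolding index_mult_mat_sum[OF pow_carrier_mat[OF Z] B kl] abs_mult[symmetric] by (rule sum_abs)
    also have "\<dots> \<le> a t"
      unfolding a_def using abs_pow_mat_le[OF M Z dom kl(1)] by (intro sum_mono mult_right_mono) auto
    finally show ?thesis .
  qed
  have "(\<Sum>t<T. ((Z ^\<^sub>m t * B) $$ (k, l))\<^sup>2) \<le> (\<Sum>t<T. (a t)\<^sup>2)"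
    using abs_le by (intro sum_mono) (metis abs_ge_zero power2_abs power_mono)
  also have "\<dots> \<le> (\<Sum>t<T. a t)\<^sup>2"
    using abs_le by (intro sum_squares_le_square_sum) (rule order_trans[OF abs_ge_zero])
  also have "\<dots> \<le> ((Y * abs_mat B) $$ (k, l))\<^sup>2"
  proof (rule power_mono)
    have "(\<Sum>t<T. a t) = (\<Sum>q<n. (\<Sum>t<T. (M ^\<^sub>m t) $$ (k, q)) * \<bar>B $$ (q, l)\<bar>)"
      unfolding a_def by (subst sum.swap) (simp add: sum_distrib_right)
    also have "\<dots> \<le> (\<Sum>q<n. Y $$ (k, q) * \<bar>B $$ (q, l)\<bar>)"
      using partial kl by (intro sum_mono mult_right_mono) auto
    also have "\<dots> = (Y * abs_mat B) $$ (k, l)"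
      unfolding index_mult_mat_sum[OF Y abs_mat_carrier[OF B] kl] using B kl
      by (intro sum.cong) (auto simp: index_abs_mat)
    finally show "(\<Sum>t<T. a t) \<le> (Y * abs_mat B) $$ (k, l)" .
    show "0 \<le> (\<Sum>t<T. a t)"
      using abs_le by (intro sum_nonneg) (rule order_trans[OF abs_ge_zero])
  qed
  finally show ?thesis .
qed

lemma trace_gramian_le:
  fixes Z M B Y :: "real mat"
  assumes Z: "Z \<in> carrier_mat n n" and M: "M \<in> carrier_mat n n" and B: "B \<in> carrier_mat n m"
    and Y: "Y \<in> carrier_mat n n"
    and dom: "\<And>p q. p < n \<Longrightarrow> q < n \<Longrightarrow> \<bar>Z $$ (p, q)\<bar> \<le> M $$ (p, q)"
    and partial: "\<And>p q. p < n \<Longrightarrow> q < n \<Longrightarrow> (\<Sum>t<T. (M ^\<^sub>m t) $$ (p, q)) \<le> Y $$ (p, q)"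
  shows "trace_mat (gramian Z B T) \<le> frobenius_sq (Y * abs_mat B)"
proof -
  have "trace_mat (gramian Z B T) = (\<Sum>k<n. \<Sum>l<m. \<Sum>t<T. ((Z ^\<^sub>m t * B) $$ (k, l))\<^sup>2)"
    unfolding trace_gramian[OF Z B] frobenius_sq_def
    using Z B by (simp add: sum.swap[of _ "{..<T}"])
  also have "\<dots> \<le> frobenius_sq (Y * abs_mat B)"
    unfolding frobenius_sq_def using sum_squares_pow_mult_entry_le[OF Z M B Y dom partial] Y abs_mat_carrier[OF B]
    by (auto intro!: sum_mono)
  finally show ?thesis .
qed

section \<open>The trace of the inverse of a positive definite matrix\<close>

lemma pos_def_mat_quadratic_form_nonneg:
  assumes pd: "pos_def_mat W" and W: "W \<in> carrier_mat n n"
  shows "0 \<le> (\<Sum>p<n. f p * (\<Sum>q<n. W $$ (p, q) * f q))"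
proof -
  define x where "x = vec n f"
  have x: "x \<in> carrier_vec n" unfolding x_def by simp
  have "scalar_prod x (W *\<^sub>v x) = (\<Sum>p<n. f p * (\<Sum>q<n. W $$ (p, q) * f q))"
    using W unfolding x_def by (simp add: scalar_prod_def lessThan_atLeast0)
  moreover have "0 \<le> scalar_prod x (W *\<^sub>v x)"
    using pd W x unfolding pos_def_mat_def by (cases "x = 0\<^sub>v n") force+
  ultimately show ?thesis by simp
qed

lemma pos_def_mat_diag_pos:
  assumes pd: "pos_def_mat W" and W: "W \<in> carrier_mat n n" and k: "k < n"
  shows "0 < W $$ (k, k)"
proof -
  have "dim_row W = n" using W by simp
  then have "0 < scalar_prod (unit_vec n k) (W *\<^sub>v unit_vec n k)"
    using pd k unfolding pos_def_mat_def by simp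
  moreover have "scalar_prod (unit_vec n k) (W *\<^sub>v unit_vec n k) = W $$ (k, k)"
    using W k by simp
  ultimately show ?thesis by simp
qed

lemma pos_def_mat_trace_pos:
  assumes pd: "pos_def_mat W" and W: "W \<in> carrier_mat n n" and n: "0 < n"
  shows "0 < trace_mat W"
  unfolding trace_mat_def using W pos_def_mat_diag_pos[OF pd W] n by (auto intro!: sum_pos)

lemma pos_def_mat_inverse:
  assumes pd: "pos_def_mat W" and W: "W \<in> carrier_mat n n"
  shows "inv_mat W \<in> carrier_mat n n" and "W * inv_mat W = 1\<^sub>m n"
proof -
  have "v = 0\<^sub>v n" if "v \<in> carrier_vec n" "W *\<^sub>v v = 0\<^sub>v n" for v
    using pd W that unfolding pos_def_mat_def by force
  then show "inv_mat W \<in> carrier_mat n n" "W * inv_mat W = 1\<^sub>m n"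
    using inv_mat_if_trivial_kernel[OF W] by auto
qed

lemma pos_def_mat_inverse_diag_bound:
  assumes pd: "pos_def_mat W" and W: "W \<in> carrier_mat n n" and V: "V \<in> carrier_mat n n"
    and WV: "W * V = 1\<^sub>m n" and k: "k < n"
  shows "0 \<le> a\<^sup>2 * V $$ (k, k) - 2 * a * b + b\<^sup>2 * W $$ (k, k)"
proof -
  have sym: "W $$ (p, q) = W $$ (q, p)" if "p < n" "q < n" for p q
    using pd W that unfolding pos_def_mat_def by (metis carrier_matD(2) index_transpose_mat(1))
  have WV_entry: "(\<Sum>q<n. W $$ (p, q) * V $$ (q, l)) = (if p = l then 1 else 0)" if "p < n" "l < n" for p l
    using index_mult_mat_sum[OF W V that] WV that by simp
  \<comment> \<open>the quadratic form of \<open>W\<close> at \<open>a V e\<^sub>k - b e\<^sub>k\<close>\<close>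
  define f where "f p = a * V $$ (p, k) - (if p = k then b else 0)" for p
  have Wf: "(\<Sum>q<n. W $$ (p, q) * f q) = a * (if p = k then 1 else 0) - b * W $$ (p, k)" if p: "p < n" for p
  proof -
    have "(\<Sum>q<n. W $$ (p, q) * f q)
        = (\<Sum>q<n. a * (W $$ (p, q) * V $$ (q, k)) - (if q = k then b * W $$ (p, q) else 0))"
      by (intro sum.cong refl) (simp add: f_def algebra_simps)
    also have "\<dots> = a * (\<Sum>q<n. W $$ (p, q) * V $$ (q, k)) - b * W $$ (p, k)"
      using k by (simp add: sum_subtractf sum_distrib_left)
    finally show ?thesis using WV_entry[OF p k] by simp
  qed
  have fW: "(\<Sum>p<n. f p * W $$ (p, k)) = a - b * W $$ (k, k)"
  proof -
    have "(\<Sum>p<n. f p * W $$ (p, k))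
        = (\<Sum>p<n. a * (W $$ (k, p) * V $$ (p, k)) - (if p = k then b * W $$ (p, k) else 0))"
      using sym k by (intro sum.cong refl) (auto simp: f_def algebra_simps)
    also have "\<dots> = a - b * W $$ (k, k)"
      using k WV_entry[OF k k] by (simp add: sum_subtractf flip: sum_distrib_left)
    finally show ?thesis .
  qed
  have "0 \<le> (\<Sum>p<n. f p * (\<Sum>q<n. W $$ (p, q) * f q))"
    by (rule pos_def_mat_quadratic_form_nonneg[OF pd W])
  also have "\<dots> = (\<Sum>p<n. a * (if p = k then f p else 0) - b * (f p * W $$ (p, k)))"
    by (intro sum.cong refl) (simp only: lessThan_iff Wf, simp add: algebra_simps)
  also have "\<dots> = a * f k - b * (a - b * W $$ (k, k))"
    using k by (simp add: sum_subtractf fW flip: sum_distrib_left)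
  also have "\<dots> = a\<^sup>2 * V $$ (k, k) - 2 * a * b + b\<^sup>2 * W $$ (k, k)"
    by (simp add: f_def algebra_simps power2_eq_square)
  finally show ?thesis .
qed

lemma trace_inv_mat_mult_trace_ge:
  assumes pd: "pos_def_mat W" and W: "W \<in> carrier_mat n n"
  shows "real n ^ 2 \<le> trace_mat (inv_mat W) * trace_mat W"
proof (cases "n = 0")
  case False
  define V where "V = inv_mat W"
  have V: "V \<in> carrier_mat n n" and WV: "W * V = 1\<^sub>m n"
    using pos_def_mat_inverse[OF pd W] unfolding V_def by auto
  define a where "a = trace_mat W"
  have trW: "(\<Sum>k<n. W $$ (k, k)) = a" and trV: "(\<Sum>k<n. V $$ (k, k)) = trace_mat V"
    using W V unfolding a_def trace_mat_def by auto
  have "0 < a" unfolding a_def using pos_def_mat_trace_pos[OF pd W] False by simp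
  \<comment> \<open>sum the diagonal bounds with \<open>a = tr W\<close> and \<open>b = n\<close>\<close>
  have "0 \<le> (\<Sum>k<n. a\<^sup>2 * V $$ (k, k) - 2 * a * real n + (real n)\<^sup>2 * W $$ (k, k))"
    by (intro sum_nonneg pos_def_mat_inverse_diag_bound[OF pd W V WV]) auto
  also have "\<dots> = a\<^sup>2 * trace_mat V - real n * (2 * a * real n) + (real n)\<^sup>2 * a"
    by (simp add: sum.distrib sum_subtractf trV trW flip: sum_distrib_left)
  also have "\<dots> = a * (a * trace_mat V - (real n)\<^sup>2)"
    by (simp add: algebra_simps power2_eq_square)
  finally have "(real n)\<^sup>2 \<le> a * trace_mat V"
    using \<open>0 < a\<close> by (simp add: zero_le_mult_iff)
  then show ?thesis unfolding a_def V_def by (simp add: mult.commute)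
qed (use pos_def_mat_inverse(1)[OF pd W] in \<open>simp add: trace_mat_def\<close>)

lemma trace_inv_mat_ge:
  assumes pd: "pos_def_mat W" and W: "W \<in> carrier_mat n n" and le: "trace_mat W \<le> t"
  shows "real n ^ 2 / t \<le> trace_mat (inv_mat W)"
proof (cases "n = 0")
  case True
  then show ?thesis using pos_def_mat_inverse(1)[OF pd W] by (simp add: trace_mat_def)
next
  case False
  have bound: "real n ^ 2 \<le> trace_mat (inv_mat W) * trace_mat W"
    by (rule trace_inv_mat_mult_trace_ge[OF pd W])
  have "0 < trace_mat W" using pos_def_mat_trace_pos[OF pd W] False by simp
  then have "real n ^ 2 / t \<le> real n ^ 2 / trace_mat W"
    using le by (intro divide_left_mono) auto
  also have "\<dots> \<le> trace_mat (inv_mat W)"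
    using bound \<open>0 < trace_mat W\<close> by (simp add: pos_divide_le_eq)
  finally show ?thesis .
qed

section \<open>Frobenius norm of a rank-one perturbation\<close>

lemma sum_mult_le_sqrt_sum_squares:
  fixes f g :: "'a \<Rightarrow> real"
  shows "(\<Sum>k\<in>K. f k * g k) \<le> sqrt (\<Sum>k\<in>K. (f k)\<^sup>2) * sqrt (\<Sum>k\<in>K. (g k)\<^sup>2)"
proof -
  have "(\<Sum>k\<in>K. f k * g k) \<le> sqrt ((\<Sum>k\<in>K. f k * g k)\<^sup>2)" by simp
  also have "\<dots> \<le> sqrt ((\<Sum>k\<in>K. (f k)\<^sup>2) * (\<Sum>k\<in>K. (g k)\<^sup>2))"
    by (rule real_sqrt_le_mono[OF Cauchy_Schwarz_ineq_sum])
  finally show ?thesis by (simp add: real_sqrt_mult)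
qed

lemma quadratic_form_le_max_eigenvalue:
  fixes g s x y :: real
  assumes g: "0 \<le> g"
  shows "g * x\<^sup>2 + s * x * y \<le> (g + sqrt (g\<^sup>2 + s\<^sup>2)) / 2 * (x\<^sup>2 + y\<^sup>2)"
proof -
  define R where "R = sqrt (g\<^sup>2 + s\<^sup>2)"
  have R2: "R\<^sup>2 = g\<^sup>2 + s\<^sup>2" unfolding R_def by simp
  have "g \<le> R" unfolding R_def using g by (simp add: real_le_rsqrt)
  show ?thesis
  proof (cases "R + g = 0")
    case True
    then have "g = 0" "R = 0" using g \<open>g \<le> R\<close> by auto
    then have "s = 0" using R2 by simp
    then show ?thesis using \<open>g = 0\<close> by simp
  next
    case False
    then have pos: "0 < R + g" using g \<open>g \<le> R\<close> by linarith
    \<comment> \<open>\<open>(g + R) / 2\<close> is the larger eigenvalue of the form, and the gap is a perfect square\<close>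
    have gap: "(R + g) * (R - g) = s\<^sup>2" using R2 by (simp add: algebra_simps power2_eq_square)
    have "(R + g) * ((R - g) * x\<^sup>2 + (R + g) * y\<^sup>2 - 2 * s * x * y)
        = ((R + g) * (R - g)) * x\<^sup>2 + ((R + g) * y)\<^sup>2 - 2 * (s * x) * ((R + g) * y)"
      by (simp add: algebra_simps power2_eq_square)
    also have "\<dots> = (s * x - (R + g) * y)\<^sup>2"
      unfolding gap by (simp add: power2_diff power_mult_distrib)
    finally have "0 \<le> (R + g) * ((R - g) * x\<^sup>2 + (R + g) * y\<^sup>2 - 2 * s * x * y)" by simp
    then have "2 * s * x * y \<le> (R - g) * x\<^sup>2 + (R + g) * y\<^sup>2"
      using pos by (simp add: zero_le_mult_iff)
    then show ?thesis unfolding R_def[symmetric] by (simp add: field_simps)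
  qed
qed

lemma weighted_row_products_le:
  fixes u :: "nat \<Rightarrow> real" and G :: "nat \<Rightarrow> nat \<Rightarrow> real"
  assumes i: "i < n" and u: "\<And>k. k < n \<Longrightarrow> 0 \<le> u k"
  shows "2 * (\<Sum>k<n. u k * (\<Sum>l<m. G k l * G i l))
    \<le> (u i + sqrt (\<Sum>k<n. (u k)\<^sup>2)) * (\<Sum>k<n. \<Sum>l<m. (G k l)\<^sup>2)"
proof -
  define x where "x k = sqrt (\<Sum>l<m. (G k l)\<^sup>2)" for k
  have x_nonneg: "0 \<le> x k" for k unfolding x_def by (simp add: sum_nonneg)
  have x_sq: "(x k)\<^sup>2 = (\<Sum>l<m. (G k l)\<^sup>2)" for k unfolding x_def by (simp add: sum_nonneg)
  define K where "K = {..<n} - {i}"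
  have split: "(\<Sum>k<n. h k) = h i + (\<Sum>k\<in>K. h k)" for h :: "nat \<Rightarrow> real"
    unfolding K_def using i by (simp add: sum.remove)
  define s where "s = sqrt (\<Sum>k\<in>K. (u k)\<^sup>2)"
  define b where "b = sqrt (\<Sum>k\<in>K. (x k)\<^sup>2)"
  have "(\<Sum>k<n. u k * (\<Sum>l<m. G k l * G i l)) \<le> (\<Sum>k<n. u k * (x k * x i))"
    unfolding x_def using u by (intro sum_mono mult_left_mono sum_mult_le_sqrt_sum_squares) auto
  also have "\<dots> = u i * (x i)\<^sup>2 + (\<Sum>k\<in>K. u k * x k) * x i"
    unfolding split by (simp add: sum_distrib_right power2_eq_square mult.assoc)
  also have "\<dots> \<le> u i * (x i)\<^sup>2 + s * x i * b"
  proof -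
    have "(\<Sum>k\<in>K. u k * x k) \<le> s * b"
      unfolding s_def b_def by (rule sum_mult_le_sqrt_sum_squares)
    from mult_right_mono[OF this x_nonneg[of i]] show ?thesis by (simp add: algebra_simps)
  qed
  also have "\<dots> \<le> (u i + sqrt ((u i)\<^sup>2 + s\<^sup>2)) / 2 * ((x i)\<^sup>2 + b\<^sup>2)"
    using quadratic_form_le_max_eigenvalue[where g = "u i" and s = s and x = "x i" and y = b] u i by simp
  also have "(u i)\<^sup>2 + s\<^sup>2 = (\<Sum>k<n. (u k)\<^sup>2)"
    unfolding split s_def by (simp add: sum_nonneg)
  also have "(x i)\<^sup>2 + b\<^sup>2 = (\<Sum>k<n. \<Sum>l<m. (G k l)\<^sup>2)"
    unfolding b_def x_sq[symmetric] split[of "\<lambda>k. (x k)\<^sup>2"] by (simp add: sum_nonneg)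
  finally show ?thesis by simp
qed

lemma sum_squares_rank_one_update_le:
  fixes G :: "nat \<Rightarrow> nat \<Rightarrow> real" and u :: "nat \<Rightarrow> real"
  assumes i: "i < n" and a: "0 \<le> a" and u: "\<And>k. k < n \<Longrightarrow> 0 \<le> u k"
  shows "(\<Sum>k<n. \<Sum>l<m. (G k l + a * u k * G i l)\<^sup>2)
    \<le> (1 + a * (u i + sqrt (\<Sum>k<n. (u k)\<^sup>2))) * (\<Sum>k<n. \<Sum>l<m. (G k l)\<^sup>2)
      + a\<^sup>2 * (\<Sum>k<n. (u k)\<^sup>2) * (\<Sum>l<m. (G i l)\<^sup>2)"
proof -
  have "(\<Sum>k<n. \<Sum>l<m. (G k l + a * u k * G i l)\<^sup>2)
     = (\<Sum>k<n. \<Sum>l<m. (G k l)\<^sup>2) + a * (2 * (\<Sum>k<n. u k * (\<Sum>l<m. G k l * G i l)))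
       + a\<^sup>2 * (\<Sum>k<n. (u k)\<^sup>2) * (\<Sum>l<m. (G i l)\<^sup>2)"
    by (simp add: power2_eq_square algebra_simps sum.distrib sum_distrib_left sum_distrib_right)
  also have "\<dots> \<le> (\<Sum>k<n. \<Sum>l<m. (G k l)\<^sup>2)
       + a * ((u i + sqrt (\<Sum>k<n. (u k)\<^sup>2)) * (\<Sum>k<n. \<Sum>l<m. (G k l)\<^sup>2))
       + a\<^sup>2 * (\<Sum>k<n. (u k)\<^sup>2) * (\<Sum>l<m. (G i l)\<^sup>2)"
    using weighted_row_products_le[where u = u and G = G and m = m, OF i u] a by (simp add: mult_left_mono)
  finally show ?thesis by (simp add: algebra_simps)
qed

section \<open>Rank-one updates of an inverse\<close>

lemma dim_unit_outer [simp]: "dim_row (unit_outer n j i) = n" "dim_col (unit_outer n j i) = n"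
  unfolding unit_outer_def by auto

lemma unit_outer_carrier: "unit_outer n j i \<in> carrier_mat n n"
  by (simp add: carrier_matI)

lemma index_unit_outer:
  assumes "p < n" "q < n" "j < n" "i < n"
  shows "unit_outer n j i $$ (p, q) = (if p = j \<and> q = i then 1 else 0)"
  using assms by (simp add: unit_outer_def scalar_prod_def mat_of_cols_index mat_of_rows_index)

lemma index_one_minus_rank_one_update_mult:
  fixes M Z :: "real mat"
  assumes M: "M \<in> carrier_mat n n" and Z: "Z \<in> carrier_mat n k"
    and i: "i < n" and j: "j < n" and p: "p < n" and q: "q < k"
  shows "((1\<^sub>m n - (M + c \<cdot>\<^sub>m unit_outer n j i)) * Z) $$ (p, q)
    = ((1\<^sub>m n - M) * Z) $$ (p, q) - (if p = j then c * Z $$ (i, q) else 0)"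
proof -
  have M': "M + c \<cdot>\<^sub>m unit_outer n j i \<in> carrier_mat n n" using M unit_outer_carrier by auto
  have "(\<Sum>l<n. (M + c \<cdot>\<^sub>m unit_outer n j i) $$ (p, l) * Z $$ (l, q))
      = (\<Sum>l<n. M $$ (p, l) * Z $$ (l, q) + (if p = j \<and> l = i then c * Z $$ (l, q) else 0))"
    using M unit_outer_carrier p i j by (intro sum.cong refl) (auto simp: index_unit_outer algebra_simps)
  also have "\<dots> = (\<Sum>l<n. M $$ (p, l) * Z $$ (l, q)) + (if p = j then c * Z $$ (i, q) else 0)"
    using i by (simp add: sum.distrib)
  finally show ?thesis
    unfolding index_one_minus_mult_mat[OF M' Z p q] index_one_minus_mult_mat[OF M Z p q] by simp
qed

lemma rank_one_update_denominator_nonzero: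
  fixes M X :: "real mat"
  assumes M: "M \<in> carrier_mat n n" and X: "X \<in> carrier_mat n n" and MX: "(1\<^sub>m n - M) * X = 1\<^sub>m n"
    and i: "i < n" and j: "j < n"
    and ker: "\<And>v. v \<in> carrier_vec n \<Longrightarrow> (1\<^sub>m n - (M + c \<cdot>\<^sub>m unit_outer n j i)) *\<^sub>v v = 0\<^sub>v n \<Longrightarrow> v = 0\<^sub>v n"
  shows "c * X $$ (i, j) \<noteq> 1"
proof
  assume c: "c * X $$ (i, j) = 1"
  \<comment> \<open>then the \<open>j\<close>-th column of \<open>X\<close> lies in the kernel of the updated matrix\<close>
  have "(1\<^sub>m n - (M + c \<cdot>\<^sub>m unit_outer n j i)) *\<^sub>v col X j = 0\<^sub>v n"
  proof (rule eq_vecI)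
    fix p assume "p < dim_vec (0\<^sub>v n)"
    then have p: "p < n" by simp
    have "((1\<^sub>m n - (M + c \<cdot>\<^sub>m unit_outer n j i)) *\<^sub>v col X j) $ p
        = ((1\<^sub>m n - (M + c \<cdot>\<^sub>m unit_outer n j i)) * X) $$ (p, j)"
      using X p j by simp
    also have "\<dots> = 0"
      unfolding index_one_minus_rank_one_update_mult[OF M X i j p j] MX using p j c by simp
    finally show "((1\<^sub>m n - (M + c \<cdot>\<^sub>m unit_outer n j i)) *\<^sub>v col X j) $ p = 0\<^sub>v n $ p"
      using p by simp
  qed (use M in simp)
  moreover have "col X j \<in> carrier_vec n" using X by (simp add: carrier_vecI)
  ultimately have "col X j = 0\<^sub>v n" using ker by simp
  then have "((1\<^sub>m n - M) * X) $$ (j, j) = 0" using M X j by (simp add: scalar_prod_def)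
  with MX j show False by simp
qed

lemma inv_mat_rank_one_update:
  fixes M X :: "real mat"
  assumes M: "M \<in> carrier_mat n n" and X: "X \<in> carrier_mat n n" and MX: "(1\<^sub>m n - M) * X = 1\<^sub>m n"
    and i: "i < n" and j: "j < n" and d: "c * X $$ (i, j) \<noteq> 1"
  shows "inv_mat (1\<^sub>m n - (M + c \<cdot>\<^sub>m unit_outer n j i))
    = mat n n (\<lambda>(p, q). X $$ (p, q) + c / (1 - c * X $$ (i, j)) * X $$ (p, j) * X $$ (i, q))"
    (is "_ = ?Z")
proof (rule inv_mat_eqI)
  show "1\<^sub>m n - (M + c \<cdot>\<^sub>m unit_outer n j i) \<in> carrier_mat n n" "?Z \<in> carrier_mat n n"
    using M unit_outer_carrier by auto
  define a where "a = c / (1 - c * X $$ (i, j))"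
  have a: "a * x = c * x + a * (c * (X $$ (i, j) * x))" for x
  proof -
    have "a * (1 - c * X $$ (i, j)) * x = c * x" using d unfolding a_def by simp
    then show ?thesis by (simp add: algebra_simps)
  qed
  have MX_entry: "((1\<^sub>m n - M) * X) $$ (p, q) = (if p = q then 1 else 0)" if "p < n" "q < n" for p q
    using MX that by simp
  show "(1\<^sub>m n - (M + c \<cdot>\<^sub>m unit_outer n j i)) * ?Z = 1\<^sub>m n"
  proof (rule eq_matI)
    fix p q assume "p < dim_row (1\<^sub>m n)" "q < dim_col (1\<^sub>m n)"
    then have p: "p < n" and q: "q < n" by auto
    have Z: "?Z \<in> carrier_mat n n" by simp
    have C: "1\<^sub>m n - M \<in> carrier_mat n n" using M by (rule minus_carrier_mat)
    have "((1\<^sub>m n - M) * ?Z) $$ (p, q)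
        = (\<Sum>l<n. (1\<^sub>m n - M) $$ (p, l) * X $$ (l, q))
          + a * X $$ (i, q) * (\<Sum>l<n. (1\<^sub>m n - M) $$ (p, l) * X $$ (l, j))"
      unfolding index_mult_mat_sum[OF C Z p q] using q
      by (simp add: a_def[symmetric] algebra_simps sum.distrib sum_distrib_left)
    also have "\<dots> = (if p = q then 1 else 0) + a * X $$ (i, q) * (if p = j then 1 else 0)"
      using MX_entry[OF p q] MX_entry[OF p j] index_mult_mat_sum[OF C X p q] index_mult_mat_sum[OF C X p j]
      by simp
    finally show "((1\<^sub>m n - (M + c \<cdot>\<^sub>m unit_outer n j i)) * ?Z) $$ (p, q) = 1\<^sub>m n $$ (p, q)"
      unfolding index_one_minus_rank_one_update_mult[OF M Z i j p q]
      using p q i a[of "X $$ (i, q)"] by (auto simp: a_def[symmetric] algebra_simps)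
  qed auto
qed

section \<open>The matrix X = (I - |A|)^-1 and the constants of the bound\<close>

lemma finite_offdiag: "finite (offdiag n)"
  by (rule finite_subset[of _ "{..<n} \<times> {..<n}"]) (auto simp: offdiag_def)

lemma vec_norm_col:
  assumes "X \<in> carrier_mat n n" "q < n"
  shows "vec_norm (col X q) = sqrt (\<Sum>k<n. (X $$ (k, q))\<^sup>2)"
  using assms unfolding vec_norm_def scalar_prod_def by (simp add: lessThan_atLeast0 power2_eq_square)

context
  fixes A :: "real mat" and n :: nat
  assumes A: "A \<in> carrier_mat n n" and stable: "rho (abs_mat A) < 1"
begin

lemma abs_mat_A_carrier: "abs_mat A \<in> carrier_mat n n"
  by (rule abs_mat_carrier[OF A])

lemma Xmat_neumann:
  shows Xmat_carrier: "Xmat A \<in> carrier_mat n n"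
    and one_minus_abs_mult_Xmat: "(1\<^sub>m n - abs_mat A) * Xmat A = 1\<^sub>m n"
    and Xmat_ge_partial_sums:
      "\<And>p q. p < n \<Longrightarrow> q < n \<Longrightarrow> (\<Sum>t<T. (abs_mat A ^\<^sub>m t) $$ (p, q)) \<le> Xmat A $$ (p, q)"
proof -
  have nonneg: "0 \<le> abs_mat A $$ (p, q)" if "p < n" "q < n" for p q
    using A that by (simp add: index_abs_mat)
  have X: "Xmat A = inv_mat (1\<^sub>m n - abs_mat A)" using A unfolding Xmat_def by simp
  show "Xmat A \<in> carrier_mat n n" "(1\<^sub>m n - abs_mat A) * Xmat A = 1\<^sub>m n"
    "\<And>p q. p < n \<Longrightarrow> q < n \<Longrightarrow> (\<Sum>t<T. (abs_mat A ^\<^sub>m t) $$ (p, q)) \<le> Xmat A $$ (p, q)"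
    unfolding X using neumann_inverse[OF abs_mat_A_carrier nonneg stable] by auto
qed

lemma Xmat_nonneg: "p < n \<Longrightarrow> q < n \<Longrightarrow> 0 \<le> Xmat A $$ (p, q)"
  using Xmat_ge_partial_sums[of p q 0] by simp

lemma Xmat_diag_ge_1: "p < n \<Longrightarrow> 1 \<le> Xmat A $$ (p, p)"
  using Xmat_ge_partial_sums[of p p 1] abs_mat_A_carrier by simp

lemma Hmat_eq:
  assumes "B \<in> carrier_mat n m"
  shows "Hmat A B = (Xmat A * abs_mat B) * (Xmat A * abs_mat B)\<^sup>T"
  unfolding Hmat_def using Xmat_carrier abs_mat_carrier[OF assms] by (rule mult_transpose_assoc)

lemma index_Hmat_diag:
  assumes "B \<in> carrier_mat n m" "k < n"
  shows "Hmat A B $$ (k, k) = (\<Sum>l<m. ((Xmat A * abs_mat B) $$ (k, l))\<^sup>2)"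
  using assms Xmat_carrier abs_mat_carrier[OF assms(1)] unfolding Hmat_eq[OF assms(1)]
  by (simp add: scalar_prod_def lessThan_atLeast0 power2_eq_square)

lemma trace_gramian_le_trace_Hmat:
  assumes B: "B \<in> carrier_mat n m"
  shows "trace_mat (gramian A B T) \<le> trace_mat (Hmat A B)"
  unfolding Hmat_eq[OF B] trace_mult_transpose_self
  using A abs_mat_A_carrier B Xmat_carrier Xmat_ge_partial_sums
  by (intro trace_gramian_le[of _ n "abs_mat A"]) (auto simp: index_abs_mat)

lemma alpha_pq_le_alpha_c: "(p, q) \<in> offdiag n \<Longrightarrow> alpha_pq A w p q \<le> alpha_c A w"
  unfolding alpha_c_def using A finite_offdiag by (intro Max_ge) force+

lemma Xmat_plus_col_norm_le_beta_c:
  assumes "(p, q) \<in> offdiag n"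
  shows "Xmat A $$ (p, q) + sqrt (\<Sum>k<n. (Xmat A $$ (k, q))\<^sup>2) \<le> beta_c A"
proof -
  have "Xmat A $$ (p, q) \<le> Max ((\<lambda>(p, q). Xmat A $$ (p, q)) ` offdiag n)"
    using assms finite_offdiag by (intro Max_ge) force+
  moreover have "sqrt (\<Sum>k<n. (Xmat A $$ (k, q))\<^sup>2) \<le> Max ((\<lambda>q. vec_norm (col (Xmat A) q)) ` {..<n})"
  proof -
    have "q < n" using assms unfolding offdiag_def by simp
    then show ?thesis unfolding vec_norm_col[OF Xmat_carrier \<open>q < n\<close>, symmetric] by (intro Max_ge) auto
  qed
  ultimately show ?thesis unfolding beta_c_def using A by fastforce
qed

lemma beta_c_nonneg:
  assumes "(p, q) \<in> offdiag n"
  shows "0 \<le> beta_c A"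
proof -
  have "2 * Xmat A $$ (p, q) \<le> Max ((\<lambda>(p, q). 2 * Xmat A $$ (p, q)) ` offdiag n)"
    using assms finite_offdiag by (intro Max_ge) force+
  moreover have "0 \<le> Xmat A $$ (p, q)" using assms Xmat_nonneg unfolding offdiag_def by simp
  ultimately show ?thesis unfolding beta_c_def using A by fastforce
qed

lemma col_sum_squares_le_gamma_c:
  assumes "q < n"
  shows "(\<Sum>k<n. (Xmat A $$ (k, q))\<^sup>2) \<le> gamma_c A"
proof -
  have "(\<Sum>k<n. (Xmat A $$ (k, q))\<^sup>2) = ((Xmat A)\<^sup>T * Xmat A) $$ (q, q)"
    using assms Xmat_carrier by (simp add: scalar_prod_def lessThan_atLeast0 power2_eq_square)
  also have "\<dots> \<le> gamma_c A" unfolding gamma_c_def using A assms by (intro Max_ge) auto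
  finally show ?thesis .
qed

lemma Hmat_diag_le_gamma_bar_c: "k < n \<Longrightarrow> Hmat A B $$ (k, k) \<le> gamma_bar_c A B"
  unfolding gamma_bar_c_def using A by (intro Max_ge) auto

context
  fixes i j :: nat and w :: real
  assumes i: "i < n" and j: "j < n" and ij: "i \<noteq> j"
    and stable_update: "rho (abs_mat A + \<bar>w\<bar> \<cdot>\<^sub>m unit_outer n j i) < 1"
begin

lemma abs_update_carrier: "abs_mat A + \<bar>w\<bar> \<cdot>\<^sub>m unit_outer n j i \<in> carrier_mat n n"
  using abs_mat_A_carrier unit_outer_carrier by simp

lemma abs_update_nonneg: "p < n \<Longrightarrow> q < n \<Longrightarrow> 0 \<le> (abs_mat A + \<bar>w\<bar> \<cdot>\<^sub>m unit_outer n j i) $$ (p, q)"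
  using A i j by (simp add: index_abs_mat index_unit_outer)

lemma inv_mat_one_minus_abs_update:
  "inv_mat (1\<^sub>m n - (abs_mat A + \<bar>w\<bar> \<cdot>\<^sub>m unit_outer n j i))
    = mat n n (\<lambda>(p, q). Xmat A $$ (p, q) + alpha_pq A w i j * Xmat A $$ (p, j) * Xmat A $$ (i, q))"
proof -
  have "\<bar>w\<bar> * Xmat A $$ (i, j) \<noteq> 1"
    using rank_one_update_denominator_nonzero[OF abs_mat_A_carrier Xmat_carrier one_minus_abs_mult_Xmat i j]
      rho_lt_1_kernel_one_minus[OF abs_update_carrier stable_update] by blast
  from inv_mat_rank_one_update[OF abs_mat_A_carrier Xmat_carrier one_minus_abs_mult_Xmat i j this]
  show ?thesis unfolding alpha_pq_def .
qed

lemma alpha_pq_nonneg: "0 \<le> alpha_pq A w i j"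
proof (cases "1 - \<bar>w\<bar> * Xmat A $$ (i, j) = 0")
  case False
  let ?X = "Xmat A"
  \<comment> \<open>the updated inverse is nonnegative, and its \<open>(j, j)\<close> entry is \<open>X\<^sub>j\<^sub>j / (1 - |w| X\<^sub>i\<^sub>j)\<close>\<close>
  have "0 \<le> inv_mat (1\<^sub>m n - (abs_mat A + \<bar>w\<bar> \<cdot>\<^sub>m unit_outer n j i)) $$ (j, j)"
    using neumann_inverse(3)[OF abs_update_carrier abs_update_nonneg stable_update j j, of 0] by simp
  also have "\<dots> = ?X $$ (j, j) / (1 - \<bar>w\<bar> * ?X $$ (i, j))"
    unfolding inv_mat_one_minus_abs_update alpha_pq_def using j False by (simp add: field_simps)
  finally have "0 < 1 - \<bar>w\<bar> * ?X $$ (i, j)"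
    using Xmat_diag_ge_1[OF j] False by (simp add: zero_le_divide_iff)
  then show ?thesis unfolding alpha_pq_def by simp
qed (simp add: alpha_pq_def)

lemma frobenius_sq_inv_abs_update_mult:
  assumes B: "B \<in> carrier_mat n m"
  defines "G \<equiv> Xmat A * abs_mat B"
  shows "frobenius_sq (inv_mat (1\<^sub>m n - (abs_mat A + \<bar>w\<bar> \<cdot>\<^sub>m unit_outer n j i)) * abs_mat B)
    = (\<Sum>k<n. \<Sum>l<m. (G $$ (k, l) + alpha_pq A w i j * Xmat A $$ (k, j) * G $$ (i, l))\<^sup>2)"
proof -
  let ?X = "Xmat A" and ?a = "alpha_pq A w i j"
  have absB: "abs_mat B \<in> carrier_mat n m" by (rule abs_mat_carrier[OF B])
  have "(mat n n (\<lambda>(p, q). ?X $$ (p, q) + ?a * ?X $$ (p, j) * ?X $$ (i, q)) * abs_mat B) $$ (k, l)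
      = G $$ (k, l) + ?a * ?X $$ (k, j) * G $$ (i, l)" if kl: "k < n" "l < m" for k l
  proof -
    have "(mat n n (\<lambda>(p, q). ?X $$ (p, q) + ?a * ?X $$ (p, j) * ?X $$ (i, q)) * abs_mat B) $$ (k, l)
        = (\<Sum>q<n. ?X $$ (k, q) * abs_mat B $$ (q, l)) + ?a * ?X $$ (k, j) * (\<Sum>q<n. ?X $$ (i, q) * abs_mat B $$ (q, l))"
      using kl absB by (subst index_mult_mat_sum[of _ n n _ m]) (auto simp: algebra_simps sum.distrib sum_distrib_left)
    then show ?thesis
      unfolding G_def index_mult_mat_sum[OF Xmat_carrier absB kl] index_mult_mat_sum[OF Xmat_carrier absB i kl(2)] .
  qed
  then show ?thesis
    unfolding inv_mat_one_minus_abs_update frobenius_sq_def using absB by simp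
qed

lemma trace_gramian_update_le_sum_squares:
  assumes B: "B \<in> carrier_mat n m"
  defines "G \<equiv> Xmat A * abs_mat B"
  shows "trace_mat (gramian (A + w \<cdot>\<^sub>m unit_outer n j i) B T)
    \<le> (\<Sum>k<n. \<Sum>l<m. (G $$ (k, l) + alpha_pq A w i j * Xmat A $$ (k, j) * G $$ (i, l))\<^sup>2)"
proof -
  let ?M = "abs_mat A + \<bar>w\<bar> \<cdot>\<^sub>m unit_outer n j i"
  have "\<bar>(A + w \<cdot>\<^sub>m unit_outer n j i) $$ (p, q)\<bar> \<le> ?M $$ (p, q)" if "p < n" "q < n" for p q
    using that A i j by (simp add: index_abs_mat index_unit_outer abs_triangle_ineq[THEN order_trans] abs_mult)
  then have "trace_mat (gramian (A + w \<cdot>\<^sub>m unit_outer n j i) B T) \<le> frobenius_sq (inv_mat (1\<^sub>m n - ?M) * abs_mat B)"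
    using A B unit_outer_carrier abs_update_carrier neumann_inverse(1,3)[OF abs_update_carrier abs_update_nonneg stable_update]
    by (intro trace_gramian_le[of _ n ?M]) auto
  then show ?thesis unfolding frobenius_sq_inv_abs_update_mult[OF B] G_def .
qed

lemma trace_gramian_update_le:
  assumes B: "B \<in> carrier_mat n m"
  shows "trace_mat (gramian (A + w \<cdot>\<^sub>m unit_outer n j i) B T)
    \<le> (1 + alpha_c A w * beta_c A) * trace_mat (Hmat A B) + (alpha_c A w)\<^sup>2 * gamma_c A * gamma_bar_c A B"
proof -
  define G where "G = Xmat A * abs_mat B"
  define a where "a = alpha_pq A w i j"
  define u where "u k = Xmat A $$ (k, j)" for k
  have ij_offdiag: "(i, j) \<in> offdiag n" using i j ij unfolding offdiag_def by simp
  have a: "0 \<le> a" "a \<le> alpha_c A w"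
    using alpha_pq_nonneg alpha_pq_le_alpha_c[OF ij_offdiag] unfolding a_def by auto
  have u: "0 \<le> u k" if "k < n" for k using Xmat_nonneg[OF that j] unfolding u_def .
  have tH: "trace_mat (Hmat A B) = (\<Sum>k<n. \<Sum>l<m. (G $$ (k, l))\<^sup>2)"
    unfolding Hmat_eq[OF B] trace_mult_transpose_self frobenius_sq_def G_def
    using Xmat_carrier abs_mat_carrier[OF B] by simp
  have alpha_beta: "a * (u i + sqrt (\<Sum>k<n. (u k)\<^sup>2)) \<le> alpha_c A w * beta_c A"
    using a u[OF i] Xmat_plus_col_norm_le_beta_c[OF ij_offdiag] beta_c_nonneg[OF ij_offdiag]
    unfolding u_def by (intro mult_mono) (auto intro!: add_nonneg_nonneg sum_nonneg)
  have gamma: "(\<Sum>k<n. (u k)\<^sup>2) \<le> gamma_c A" "0 \<le> (\<Sum>k<n. (u k)\<^sup>2)"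
    unfolding u_def by (rule col_sum_squares_le_gamma_c[OF j]) (simp add: sum_nonneg)
  have gamma_bar: "(\<Sum>l<m. (G $$ (i, l))\<^sup>2) \<le> gamma_bar_c A B"
    using Hmat_diag_le_gamma_bar_c[where B = B, OF i] index_Hmat_diag[OF B i] unfolding G_def by simp
  have "a\<^sup>2 \<le> (alpha_c A w)\<^sup>2" using a by (intro power_mono) auto
  then have alpha_gamma: "a\<^sup>2 * (\<Sum>k<n. (u k)\<^sup>2) * (\<Sum>l<m. (G $$ (i, l))\<^sup>2)
      \<le> (alpha_c A w)\<^sup>2 * gamma_c A * gamma_bar_c A B"
    using gamma gamma_bar by (intro mult_mono) (auto intro!: sum_nonneg)
  have "trace_mat (gramian (A + w \<cdot>\<^sub>m unit_outer n j i) B T)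
      \<le> (\<Sum>k<n. \<Sum>l<m. (G $$ (k, l) + a * u k * G $$ (i, l))\<^sup>2)"
    using trace_gramian_update_le_sum_squares[OF B] unfolding G_def a_def u_def .
  also have "\<dots> \<le> (1 + a * (u i + sqrt (\<Sum>k<n. (u k)\<^sup>2))) * trace_mat (Hmat A B)
      + a\<^sup>2 * (\<Sum>k<n. (u k)\<^sup>2) * (\<Sum>l<m. (G $$ (i, l))\<^sup>2)"
    unfolding tH using sum_squares_rank_one_update_le[where G = "\<lambda>k l. G $$ (k, l)" and m = m and u = u, OF i a(1) u]
    by simp
  also have "\<dots> \<le> (1 + alpha_c A w * beta_c A) * trace_mat (Hmat A B) + (alpha_c A w)\<^sup>2 * gamma_c A * gamma_bar_c A B"
    using alpha_beta alpha_gamma unfolding tH by (intro add_mono mult_right_mono) (auto intro!: sum_nonneg)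
  finally show ?thesis .
qed

end

end

theorem theorem5p2:
  fixes A B :: "real mat" and n m T i j :: nat and w :: real
  assumes "A \<in> carrier_mat n n" and "B \<in> carrier_mat n m"
    and "rho (abs_mat A) < 1"
    and "T > 0"
    and "i < n" and "j < n" and "i \<noteq> j"
    and "rho (abs_mat A + \<bar>w\<bar> \<cdot>\<^sub>m unit_outer n j i) < 1"
  shows "(pos_def_mat (gramian A B T) \<longrightarrow>
           trace_mat (inv_mat (gramian A B T)) \<ge> real n ^ 2 / trace_mat (Hmat A B))
       \<and> (pos_def_mat (gramian (A + w \<cdot>\<^sub>m unit_outer n j i) B T) \<longrightarrow>
           trace_mat (inv_mat (gramian (A + w \<cdot>\<^sub>m unit_outer n j i) B T)) \<ge>
             real n ^ 2 / ((1 + alpha_c A w * beta_c A) * trace_mat (Hmat A B)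
                           + (alpha_c A w)^2 * gamma_c A * gamma_bar_c A B))"
proof -
  note A = assms(1) and B = assms(2) and stable = assms(3)
  have "A + w \<cdot>\<^sub>m unit_outer n j i \<in> carrier_mat n n"
    using A unit_outer_carrier by simp
  then show ?thesis
    using trace_inv_mat_ge[OF _ gramian_carrier[OF A B] trace_gramian_le_trace_Hmat[OF A stable B]]
      trace_inv_mat_ge[OF _ gramian_carrier[OF _ B] trace_gramian_update_le[OF A stable assms(5-8) B]]
    by (simp add: power2_eq_square)
qed

end
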